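(* For non-negative integers $l,m$ and sufficiently large odd primes $r$ define $$H_{l,m}(r)=\frac{\left(\frac{r-1}{2}\right)!}{\left(\frac{r-1}{2}-l+m\right)!}\,(-1)^{m+1}\,\sigma_m\!\left(1,2,\dots,\tfrac{r-1}{2}-l+m-1\right).$$ Then $H_{l,m}$ is a Fermat function, and its residue $g'_{l,m}$ lies in $\mathbb{Z}_{(m+2)}[\frac12]$.
   Context: $\sigma_j(x_1,\dots,x_k)$ is the $j$-th elementary symmetric polynomial, $\sigma_0=1$. $\mathbb{Z}_{(m)}=\mathbb{Z}[\frac12,\dots,\frac1{m-1}]$ for $m\ge3$ and $\mathbb{Z}_{(m)}=\mathbb{Z}$ for $m\le2$. A function $f$ assigning to each sufficiently large prime $r$ a rational number $f(r)$ lying in the $r$-adic integers is called a Fermat function if there is a rational number $\lambda$ with $f(r)\equiv \lambda\pmod r$ (i.e. same first $r$-adic digit) for all sufficiently large primes $r$; such $\lambda$ is unique and is called the residue of $f$. *)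

theory Defs
  imports Complex_Main "HOL-Computational_Algebra.Primes"
begin

definition r_integral :: "nat \<Rightarrow> rat \<Rightarrow> bool" where
  "r_integral r q \<longleftrightarrow> \<not> int r dvd snd (quotient_of q)"

text \<open>q and c are r-adic integers with the same first r-adic digit.\<close>
definition cong_rat :: "nat \<Rightarrow> rat \<Rightarrow> rat \<Rightarrow> bool" where
  "cong_rat r q c \<longleftrightarrow> r_integral r q \<and> r_integral r c \<and> int r dvd fst (quotient_of (q - c))"

definition has_fermat_residue :: "(nat \<Rightarrow> rat) \<Rightarrow> rat \<Rightarrow> bool" where
  "has_fermat_residue f c \<longleftrightarrow> (\<exists>N. \<forall>r. prime r \<and> r \<ge> N \<longrightarrow> cong_rat r (f r) c)"

definition fermat_function :: "(nat \<Rightarrow> rat) \<Rightarrow> bool" where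
  "fermat_function f \<longleftrightarrow> (\<exists>c. has_fermat_residue f c)"

definition fermat_residue :: "(nat \<Rightarrow> rat) \<Rightarrow> rat" where
  "fermat_residue f = (THE c. has_fermat_residue f c)"

definition esym :: "nat \<Rightarrow> nat \<Rightarrow> rat" where
  "esym j k = (\<Sum>S\<in>{S. S \<subseteq> {1..k} \<and> card S = j}. \<Prod>i\<in>S. of_nat i)"

text \<open>Z_(m) = Z[1/2,...,1/(m-1)] for m >= 3, Z for m <= 2, as a set of rationals.\<close>
definition Zloc :: "nat \<Rightarrow> rat set" where
  "Zloc m = (if m \<ge> 3
     then {q. \<forall>p::nat. prime p \<and> int p dvd snd (quotient_of q) \<longrightarrow> p < m}
     else {q. snd (quotient_of q) = 1})"

definition adjoin_half :: "rat set \<Rightarrow> rat set" where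
  "adjoin_half S = {x / 2 ^ k | x k. x \<in> S}"

definition H :: "nat \<Rightarrow> nat \<Rightarrow> nat \<Rightarrow> rat" where
  "H l m r = (let n = (r - 1) div 2; N = n + m - l in
     (fact n / fact N) * (-1) ^ (m + 1) * esym m (N - 1))"

end

(* Write r = 2n + 1 and N = n + m - l. For m > 0, sigma_m(1, ..., N - 1) is a polynomial in N of
   degree 2m vanishing at N = 1, ..., m, so it equals binom(N, m + 1) * Q_m(N - m - 1) for a polynomial
   Q_m of degree < m. The factor binom(N, m + 1) cancels the factorials, and H_{l,m}(2n + 1) becomes a
   polynomial in n whose coefficients are p-integral for every prime p >= m + 2: the coefficients of
   Q_m in the binomial basis are determined by the values Q_m(0), ..., Q_m(m - 1), and these are
   p-integral because p divides sigma_m(1, ..., M) for p - 1 <= M < p - 1 + m (multiplication by a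
   primitive root permutes the residues mod p). Since n is congruent to -1/2 modulo r, the residue is
   the value of this polynomial at -1/2. For m = 0, H_{l,0}(2n + 1) = -n!/(n - l)! directly, and its
   value at -1/2 has a power of 2 as denominator. *)

theory Submission
  imports Defs "HOL-Number_Theory.Number_Theory"
begin

section \<open>Integrality and congruences at a prime\<close>

lemma quotient_of_cross_mult:
  assumes "quotient_of q = (n, d)" "q = of_int a / of_int b" "b \<noteq> 0"
  shows "n * b = a * d"
proof -
  have "d > 0" "q = of_int n / of_int d"
    using assms(1) quotient_of_denom_pos quotient_of_div by blast+
  then have "(of_int n :: rat) * of_int b = of_int a * of_int d"
    using assms(2,3) by (simp add: frac_eq_eq)
  then show ?thesis
    by (metis of_int_eq_iff of_int_mult)
qed

lemma quotient_of_denom_dvd: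
  assumes "quotient_of q = (n, d)" "q = of_int a / of_int b" "b \<noteq> 0"
  shows "d dvd b"
proof -
  have "d dvd n * b"
    using quotient_of_cross_mult[OF assms] by simp
  then show ?thesis
    using quotient_of_coprime[OF assms(1)] by (metis coprime_commute coprime_dvd_mult_right_iff)
qed

context
  fixes r :: nat
  assumes r: "prime r"
begin

lemma r_integral_iff_fraction:
  "r_integral r q \<longleftrightarrow> (\<exists>a b. \<not> int r dvd b \<and> q = of_int a / of_int b)"
proof
  assume "r_integral r q"
  then show "\<exists>a b. \<not> int r dvd b \<and> q = of_int a / of_int b"
    unfolding r_integral_def by (metis prod.collapse quotient_of_div)
next
  assume "\<exists>a b. \<not> int r dvd b \<and> q = of_int a / of_int b"
  then obtain a b where ab: "\<not> int r dvd b" "q = of_int a / of_int b"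
    by blast
  obtain n d where nd: "quotient_of q = (n, d)"
    by fastforce
  have "d dvd b"
    using quotient_of_denom_dvd[OF nd ab(2)] ab(1) by auto
  then show "r_integral r q"
    using ab(1) nd unfolding r_integral_def by (auto dest: dvd_trans)
qed

lemma r_integral_of_int [simp]: "r_integral r (of_int a)"
  using r by (auto simp: r_integral_def)

lemma r_integral_of_nat [simp]: "r_integral r (of_nat a)"
  using r_integral_of_int[of "int a"] by simp

lemma r_integral_0 [simp]: "r_integral r 0"
  and r_integral_1 [simp]: "r_integral r 1"
  using r_integral_of_int[of 0] r_integral_of_int[of 1] by simp_all

lemma r_integral_mult [intro]:
  assumes "r_integral r x" "r_integral r y"
  shows "r_integral r (x * y)"
proof -
  obtain a b c d where "\<not> int r dvd b" "x = of_int a / of_int b"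
    and "\<not> int r dvd d" "y = of_int c / of_int d"
    using assms unfolding r_integral_iff_fraction by blast
  moreover from this have "\<not> int r dvd b * d"
    using r by (simp add: prime_dvd_mult_iff)
  ultimately show ?thesis
    unfolding r_integral_iff_fraction by (intro exI[of _ "a * c"] exI[of _ "b * d"]) simp
qed

lemma r_integral_add [intro]:
  assumes "r_integral r x" "r_integral r y"
  shows "r_integral r (x + y)"
proof -
  obtain a b c d where "\<not> int r dvd b" "x = of_int a / of_int b"
    and "\<not> int r dvd d" "y = of_int c / of_int d"
    using assms unfolding r_integral_iff_fraction by blast
  moreover from this have "\<not> int r dvd b * d" "b \<noteq> 0" "d \<noteq> 0"
    using r by (auto simp: prime_dvd_mult_iff)
  ultimately show ?thesis
    unfolding r_integral_iff_fraction
    by (intro exI[of _ "a * d + c * b"] exI[of _ "b * d"]) (simp add: field_simps)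
qed

lemma r_integral_uminus [intro]: "r_integral r x \<Longrightarrow> r_integral r (- x)"
  using r_integral_mult[OF r_integral_of_int[of "- 1"]] by simp

lemma r_integral_diff [intro]: "r_integral r x \<Longrightarrow> r_integral r y \<Longrightarrow> r_integral r (x - y)"
  using r_integral_add[of x "- y"] by auto

lemma r_integral_divide_nat [intro]:
  assumes "r_integral r x" "\<not> r dvd b"
  shows "r_integral r (x / of_nat b)"
proof -
  have "r_integral r (1 / of_nat b)"
    unfolding r_integral_iff_fraction using assms(2) by (intro exI[of _ 1] exI[of _ "int b"]) simp
  from r_integral_mult[OF assms(1) this] show ?thesis
    by simp
qed

lemma r_integral_sum [intro]: "(\<And>i. i \<in> A \<Longrightarrow> r_integral r (f i)) \<Longrightarrow> r_integral r (sum f A)"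
  by (induction A rule: infinite_finite_induct) auto

lemma r_integral_power [intro]: "r_integral r x \<Longrightarrow> r_integral r (x ^ k)"
  by (induction k) auto

lemma dvd_numerator_iff_r_integral:
  "int r dvd fst (quotient_of q) \<longleftrightarrow> r_integral r (q / of_nat r)"
proof -
  obtain n d where nd: "quotient_of q = (n, d)"
    by fastforce
  have q: "q = of_int n / of_int d" "d > 0"
    using nd quotient_of_div quotient_of_denom_pos by blast+
  have r0: "r > 0"
    using r prime_gt_0_nat by blast
  show ?thesis
  proof
    assume "int r dvd fst (quotient_of q)"
    then obtain k where k: "n = int r * k"
      using nd by auto
    have "\<not> int r dvd d"
    proof
      assume "int r dvd d"
      moreover have "int r dvd n"
        using k by simp
      ultimately have "is_unit (int r)"
        using coprime_common_divisor[OF quotient_of_coprime[OF nd]] by blast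
      then show False
        using r by (simp add: not_prime_unit)
    qed
    moreover have "q / of_nat r = of_int k / of_int d"
      using q k r0 by simp
    ultimately show "r_integral r (q / of_nat r)"
      unfolding r_integral_iff_fraction by blast
  next
    assume "r_integral r (q / of_nat r)"
    then obtain a b where ab: "\<not> int r dvd b" "q / of_nat r = of_int a / of_int b"
      unfolding r_integral_iff_fraction by blast
    then have "q = of_int (int r * a) / of_int b"
      using r0 by (simp add: field_simps)
    then have "n * b = int r * a * d"
      using quotient_of_cross_mult[OF nd] ab(1) by fastforce
    then have "int r dvd n * b"
      by simp
    then show "int r dvd fst (quotient_of q)"
      using ab(1) r nd by (simp add: prime_dvd_mult_iff)
  qed
qed

lemma cong_rat_iff:
  "cong_rat r x y \<longleftrightarrow> r_integral r x \<and> r_integral r y \<and> r_integral r ((x - y) / of_nat r)"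
  unfolding cong_rat_def dvd_numerator_iff_r_integral ..

lemma cong_rat_refl: "r_integral r x \<Longrightarrow> cong_rat r x x"
  unfolding cong_rat_iff by simp

lemma cong_rat_add:
  assumes "cong_rat r x y" "cong_rat r x' y'"
  shows "cong_rat r (x + x') (y + y')"
proof -
  have "r_integral r ((x - y) / of_nat r + (x' - y') / of_nat r)"
    using assms unfolding cong_rat_iff by auto
  also have "(x - y) / of_nat r + (x' - y') / of_nat r = (x + x' - (y + y')) / of_nat r"
    using prime_gt_0_nat[OF r] by (simp add: field_simps)
  finally show ?thesis
    using assms unfolding cong_rat_iff by auto
qed

lemma cong_rat_diff:
  assumes "cong_rat r x y" "cong_rat r x' y'"
  shows "cong_rat r (x - x') (y - y')"
proof -
  have "r_integral r ((x - y) / of_nat r - (x' - y') / of_nat r)"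
    using assms unfolding cong_rat_iff by auto
  also have "(x - y) / of_nat r - (x' - y') / of_nat r = (x - x' - (y - y')) / of_nat r"
    using prime_gt_0_nat[OF r] by (simp add: field_simps)
  finally show ?thesis
    using assms unfolding cong_rat_iff by auto
qed

lemma cong_rat_mult:
  assumes "cong_rat r x y" "cong_rat r x' y'"
  shows "cong_rat r (x * x') (y * y')"
proof -
  have "r_integral r (x * ((x' - y') / of_nat r) + (x - y) / of_nat r * y')"
    using assms unfolding cong_rat_iff by blast
  also have "x * ((x' - y') / of_nat r) + (x - y) / of_nat r * y' = (x * x' - y * y') / of_nat r"
    using prime_gt_0_nat[OF r] by (simp add: field_simps)
  finally show ?thesis
    using assms unfolding cong_rat_iff by auto
qed

lemma cong_rat_divide_nat:
  assumes "cong_rat r x y" "\<not> r dvd b"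
  shows "cong_rat r (x / of_nat b) (y / of_nat b)"
proof -
  have "r_integral r ((x - y) / of_nat r / of_nat b)"
    using assms unfolding cong_rat_iff by blast
  also have "(x - y) / of_nat r / of_nat b = (x / of_nat b - y / of_nat b) / of_nat r"
    by (simp add: diff_divide_distrib mult.commute)
  finally show ?thesis
    using assms unfolding cong_rat_iff by auto
qed

lemma cong_rat_sum:
  "(\<And>i. i \<in> A \<Longrightarrow> cong_rat r (f i) (g i)) \<Longrightarrow> cong_rat r (sum f A) (sum g A)"
  by (induction A rule: infinite_finite_induct) (auto intro: cong_rat_add cong_rat_refl)

lemma cong_rat_prod:
  "(\<And>i. i \<in> A \<Longrightarrow> cong_rat r (f i) (g i)) \<Longrightarrow> cong_rat r (prod f A) (prod g A)"
  by (induction A rule: infinite_finite_induct) (auto intro: cong_rat_mult cong_rat_refl)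

lemma cong_rat_pochhammer:
  "cong_rat r x y \<Longrightarrow> cong_rat r (pochhammer x k) (pochhammer y k)"
  unfolding pochhammer_prod by (auto intro!: cong_rat_prod cong_rat_add cong_rat_refl)

lemma cong_rat_gchoose:
  assumes "cong_rat r x y" "k < r"
  shows "cong_rat r (x gchoose k) (y gchoose k)"
proof -
  have "cong_rat r (\<Prod>i = 0..<k. x - of_nat i) (\<Prod>i = 0..<k. y - of_nat i)"
    by (intro cong_rat_prod cong_rat_diff assms(1) cong_rat_refl r_integral_of_nat)
  moreover have "\<not> r dvd fact k"
    using r assms(2) by (simp add: prime_dvd_fact_iff)
  ultimately have "cong_rat r ((\<Prod>i = 0..<k. x - of_nat i) / of_nat (fact k))
      ((\<Prod>i = 0..<k. y - of_nat i) / of_nat (fact k))"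
    by (rule cong_rat_divide_nat)
  then show ?thesis
    by (simp add: gbinomial_prod_rev)
qed

end

lemma has_fermat_residue_unique:
  assumes "has_fermat_residue f c" "has_fermat_residue f c'"
  shows "c = c'"
proof -
  obtain N1 N2 where N: "\<forall>r. prime r \<and> N1 \<le> r \<longrightarrow> cong_rat r (f r) c"
    "\<forall>r. prime r \<and> N2 \<le> r \<longrightarrow> cong_rat r (f r) c'"
    using assms unfolding has_fermat_residue_def by blast
  obtain n d where nd: "quotient_of (c' - c) = (n, d)"
    by fastforce
  obtain r where r: "prime r" "N1 + N2 + nat \<bar>n\<bar> < r"
    using bigger_prime by blast
  have "r_integral r ((f r - c) / of_nat r - (f r - c') / of_nat r)"
    using N r by (auto simp: cong_rat_iff[OF r(1)] intro!: r_integral_diff[OF r(1)])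
  also have "(f r - c) / of_nat r - (f r - c') / of_nat r = (c' - c) / of_nat r"
    by (simp add: diff_divide_distrib)
  finally have "int r dvd n"
    using nd by (simp only: dvd_numerator_iff_r_integral[OF r(1), symmetric] fst_conv)
  then have "n = 0"
    using r(2) dvd_imp_le_int by force
  then show ?thesis
    using quotient_of_div[OF nd] by simp
qed

lemma fermat_residue_eqI: "has_fermat_residue f c \<Longrightarrow> fermat_residue f = c"
  unfolding fermat_residue_def using has_fermat_residue_unique by blast

section \<open>Elementary symmetric functions of 1, ..., K\<close>

definition esym_on :: "nat \<Rightarrow> nat set \<Rightarrow> nat" where
  "esym_on j A = (\<Sum>S | S \<subseteq> A \<and> card S = j. \<Prod>S)"

lemma esym_eq_esym_on: "esym j k = of_nat (esym_on j {1..k})"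
  unfolding esym_def esym_on_def by (simp add: of_nat_sum of_nat_prod)

lemma esym_on_Pow:
  "finite A \<Longrightarrow> esym_on j A = (\<Sum>S\<in>Pow A. if card S = j then \<Prod>S else 0)"
  unfolding esym_on_def by (simp add: sum.inter_filter[symmetric] Pow_def)

lemma esym_on_0 [simp]:
  assumes "finite A"
  shows "esym_on 0 A = 1"
proof -
  have "{S. S \<subseteq> A \<and> card S = 0} = {{}}"
    using assms by (auto dest: finite_subset)
  then show ?thesis
    by (simp add: esym_on_def)
qed

lemma esym_on_eq_0: "finite A \<Longrightarrow> card A < j \<Longrightarrow> esym_on j A = 0"
  by (auto simp: esym_on_Pow intro!: sum.neutral dest: card_mono)

lemma esym_on_insert:
  assumes "finite A" "x \<notin> A"
  shows "esym_on (Suc j) (insert x A) = esym_on (Suc j) A + x * esym_on j A"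
proof -
  let ?f = "\<lambda>k S. if card S = k then \<Prod>S else 0"
  have "esym_on (Suc j) (insert x A) = sum (?f (Suc j)) (Pow A) + sum (?f (Suc j)) (insert x ` Pow A)"
    unfolding esym_on_Pow[OF finite_insert[THEN iffD2, OF assms(1)]] Pow_insert
    using assms by (intro sum.union_disjoint) auto
  also have "sum (?f (Suc j)) (insert x ` Pow A) = (\<Sum>S\<in>Pow A. x * ?f j S)"
  proof (subst sum.reindex)
    show "inj_on (insert x) (Pow A)"
      using assms(2) by (auto simp: inj_on_def)
    show "sum (?f (Suc j) \<circ> insert x) (Pow A) = (\<Sum>S\<in>Pow A. x * ?f j S)"
    proof (intro sum.cong refl)
      fix S
      assume "S \<in> Pow A"
      then have "finite S" "x \<notin> S"
        using assms finite_subset by auto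
      then show "(?f (Suc j) \<circ> insert x) S = x * ?f j S"
        by simp
    qed
  qed
  finally show ?thesis
    using assms(1) by (simp add: esym_on_Pow sum_distrib_left)
qed

lemma esym_on_atLeastAtMost_Suc:
  "esym_on (Suc j) {1..Suc K} = esym_on (Suc j) {1..K} + Suc K * esym_on j {1..K}"
  using esym_on_insert[of "{1..K}" "Suc K" j] by (simp add: atLeastAtMostSuc_conv)

text \<open>The recursion mirrors \<open>esym_on_atLeastAtMost_Suc\<close> combined with Pascal's rule.\<close>

fun esym_coeff :: "nat \<Rightarrow> nat \<Rightarrow> nat" where
  "esym_coeff 0 k = (if k = 0 then 1 else 0)"
| "esym_coeff (Suc m) 0 = 0"
| "esym_coeff (Suc m) (Suc k) = k * (esym_coeff m (k - 1) + esym_coeff m k)"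

lemma esym_coeff_eq_0_high: "2 * m < k \<Longrightarrow> esym_coeff m k = 0"
proof (induction m arbitrary: k)
  case (Suc m)
  then show ?case
    by (cases k) auto
qed simp

lemma esym_coeff_eq_0_low: "0 < m \<Longrightarrow> k \<le> m \<Longrightarrow> esym_coeff m k = 0"
proof (induction m arbitrary: k)
  case (Suc m)
  then show ?case
    by (cases k) (auto simp: Suc_le_eq)
qed simp

lemma mult_choose_eq: "x * (x choose j) = Suc j * (x choose Suc j) + j * (x choose j)"
proof (cases "j \<le> x")
  case True
  have "Suc j * (x choose Suc j) = (x - j) * (x choose j)"
    by (simp only: binomial_absorption binomial_absorb_comp)
  with True show ?thesis
    by (simp add: diff_mult_distrib)
qed (simp add: binomial_eq_0)

lemma sum_mult_choose_Suc:
  assumes "f 0 = 0"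
  shows "(\<Sum>k<Suc C. f k * (Suc x choose k))
    = (\<Sum>k<Suc C. f k * (x choose k)) + (\<Sum>k<C. f (Suc k) * (x choose k))"
proof -
  have "(\<Sum>k<Suc C. f k * (Suc x choose k)) = (\<Sum>k<C. f (Suc k) * (Suc x choose Suc k))"
    by (simp only: sum.lessThan_Suc_shift assms mult_zero_left add_0)
  also have "\<dots> = (\<Sum>k<C. f (Suc k) * (x choose Suc k)) + (\<Sum>k<C. f (Suc k) * (x choose k))"
    by (simp add: binomial_Suc_Suc sum.distrib[symmetric] algebra_simps)
  also have "(\<Sum>k<C. f (Suc k) * (x choose Suc k)) = (\<Sum>k<Suc C. f k * (x choose k))"
    by (simp only: sum.lessThan_Suc_shift assms mult_zero_left add_0)
  finally show ?thesis .
qed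

lemma mult_sum_mult_choose:
  assumes "a C = 0"
  shows "x * (\<Sum>j<C. a j * (x choose j)) = (\<Sum>k<Suc C. k * (a (k - 1) + a k) * (x choose k))"
proof -
  have "x * (\<Sum>j<C. a j * (x choose j))
      = (\<Sum>j<C. Suc j * a j * (x choose Suc j)) + (\<Sum>j<C. j * a j * (x choose j))"
    by (simp add: sum_distrib_left mult.left_commute[of x] mult_choose_eq sum.distrib[symmetric]
        algebra_simps)
  also have "(\<Sum>j<C. Suc j * a j * (x choose Suc j)) = (\<Sum>k<Suc C. k * a (k - 1) * (x choose k))"
    by (simp only: sum.lessThan_Suc_shift) simp
  also have "(\<Sum>j<C. j * a j * (x choose j)) = (\<Sum>k<Suc C. k * a k * (x choose k))"
    using assms by simp
  finally show ?thesis
    by (simp add: sum.distrib[symmetric] algebra_simps)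
qed

lemma esym_on_binomial_expansion:
  "2 * m < B \<Longrightarrow> esym_on m {1..K} = (\<Sum>k<B. esym_coeff m k * (Suc K choose k))"
proof (induction m arbitrary: K B)
  case 0
  then obtain C where "B = Suc C"
    using less_imp_Suc_add by blast
  then show ?case
    by (simp only: sum.lessThan_Suc_shift) simp
next
  case (Suc m)
  note IH_m = Suc.IH
  obtain C where B: "B = Suc (Suc C)" and C: "2 * m < C"
    using Suc.prems by (intro that[of "B - 2"]) auto
  show ?case
  proof (induction K)
    case 0
    have "esym_coeff (Suc m) k * (Suc 0 choose k) = 0" for k
      by (cases "k \<le> Suc 0") (simp_all add: esym_coeff_eq_0_low binomial_eq_0)
    then show ?case
      by (simp add: esym_on_eq_0)
  next
    case (Suc K)
    have "Suc K * esym_on m {1..K} = Suc K * (\<Sum>j<C. esym_coeff m j * (Suc K choose j))"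
      using IH_m C by simp
    also have "\<dots> = (\<Sum>k<Suc C. k * (esym_coeff m (k - 1) + esym_coeff m k) * (Suc K choose k))"
      using esym_coeff_eq_0_high[OF C] by (rule mult_sum_mult_choose)
    also have "\<dots> = (\<Sum>k<Suc C. esym_coeff (Suc m) (Suc k) * (Suc K choose k))"
      by simp
    finally have step: "Suc K * esym_on m {1..K} = \<dots>" .
    have "esym_on (Suc m) {1..Suc K} = esym_on (Suc m) {1..K} + Suc K * esym_on m {1..K}"
      by (rule esym_on_atLeastAtMost_Suc)
    also have "\<dots> = (\<Sum>k<B. esym_coeff (Suc m) k * (Suc K choose k))
        + (\<Sum>k<Suc C. esym_coeff (Suc m) (Suc k) * (Suc K choose k))"
      unfolding step Suc.IH ..
    also have "\<dots> = (\<Sum>k<B. esym_coeff (Suc m) k * (Suc (Suc K) choose k))"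
      unfolding B by (rule sum_mult_choose_Suc[symmetric]) simp
    finally show ?case .
  qed
qed

lemma choose_add_mult_choose:
  "(n choose (k + j)) * ((k + j) choose k) = (n choose k) * ((n - k) choose j)"
proof (cases "k + j \<le> n")
  case True
  then show ?thesis
    using choose_mult[of k "k + j" n] by simp
next
  case False
  then show ?thesis
    by (cases "k \<le> n") (simp_all add: binomial_eq_0)
qed

lemma sum_lessThan_add:
  fixes a b :: nat
  shows "(\<Sum>k<a + b. f k) = (\<Sum>k<a. f k) + (\<Sum>j<b. f (a + j))"
  by (induction b) (simp_all add: add.assoc)

definition esym_quot_coeff :: "nat \<Rightarrow> nat \<Rightarrow> rat" where
  "esym_quot_coeff m j = of_nat (esym_coeff m (Suc m + j)) / of_nat ((Suc m + j) choose Suc m)"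

lemma esym_on_eq_choose_mult_sum:
  assumes "0 < m"
  shows "of_nat (esym_on m {1..K})
    = of_nat (Suc K choose Suc m) * (\<Sum>j<m. esym_quot_coeff m j * of_nat ((K - m) choose j))"
proof -
  have "esym_on m {1..K} = (\<Sum>k<Suc m + m. esym_coeff m k * (Suc K choose k))"
    by (rule esym_on_binomial_expansion) simp
  also have "\<dots> = (\<Sum>k<Suc m. esym_coeff m k * (Suc K choose k))
      + (\<Sum>j<m. esym_coeff m (Suc m + j) * (Suc K choose (Suc m + j)))"
    by (rule sum_lessThan_add)
  also have "(\<Sum>k<Suc m. esym_coeff m k * (Suc K choose k)) = 0"
    by (intro sum.neutral) (simp add: esym_coeff_eq_0_low[OF assms])
  finally have "(of_nat (esym_on m {1..K}) :: rat)
      = (\<Sum>j<m. of_nat (esym_coeff m (Suc m + j)) * of_nat (Suc K choose (Suc m + j)))"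
    by simp
  also have "\<dots> = (\<Sum>j<m. of_nat (Suc K choose Suc m) * (esym_quot_coeff m j * of_nat ((K - m) choose j)))"
  proof (intro sum.cong refl)
    fix j
    have "(of_nat (Suc K choose (Suc m + j)) :: rat)
        = of_nat (Suc K choose Suc m) * of_nat ((K - m) choose j) / of_nat ((Suc m + j) choose Suc m)"
      using choose_add_mult_choose[of "Suc K" "Suc m" j]
      by (simp add: field_simps flip: of_nat_mult del: binomial_Suc_Suc)
    then show "of_nat (esym_coeff m (Suc m + j)) * (of_nat (Suc K choose (Suc m + j)) :: rat)
        = of_nat (Suc K choose Suc m) * (esym_quot_coeff m j * of_nat ((K - m) choose j))"
      by (simp add: esym_quot_coeff_def)
  qed
  finally show ?thesis
    by (simp add: sum_distrib_left)
qed

lemma esym_on_div_choose_eq_sum: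
  assumes "0 < m"
  shows "of_nat (esym_on m {1..i + m}) / of_nat ((i + Suc m) choose Suc m)
    = (\<Sum>j<m. esym_quot_coeff m j * of_nat (i choose j))"
proof -
  have "(i + Suc m choose Suc m) \<noteq> 0"
    by simp
  then show ?thesis
    using esym_on_eq_choose_mult_sum[OF assms, of "i + m"] by (simp del: binomial_Suc_Suc)
qed

section \<open>Divisibility by a prime and integrality of the coefficients\<close>

lemma mult_mod_prime_bij:
  fixes p g :: nat
  assumes p: "prime p" and g: "\<not> p dvd g"
  shows "bij_betw (\<lambda>t. g * t mod p) {1..p - 1} {1..p - 1}"
proof -
  let ?A = "{1..p - 1}"
  have maps: "(\<lambda>t. g * t mod p) ` ?A \<subseteq> ?A"
  proof clarify
    fix t
    assume "t \<in> ?A"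
    then have "\<not> p dvd t"
      using prime_gt_0_nat[OF p] by (auto dest: dvd_imp_le)
    with p g have "\<not> p dvd g * t"
      by (simp add: prime_dvd_mult_iff)
    then show "g * t mod p \<in> ?A"
      using p prime_gt_0_nat[OF p] by (auto simp: dvd_eq_mod_eq_0 less_Suc_eq_le[symmetric])
  qed
  have "inj_on (\<lambda>t. g * t mod p) ?A"
  proof (rule inj_onI)
    fix s t
    assume st: "s \<in> ?A" "t \<in> ?A" "g * s mod p = g * t mod p"
    have "coprime g p"
      using prime_imp_coprime[OF p g] by (simp add: coprime_commute)
    moreover have "[g * s = g * t] (mod p)"
      using st(3) by (simp add: cong_def)
    ultimately have "[s = t] (mod p)"
      using cong_mult_lcancel_nat by blast
    with st(1,2) show "s = t"
      by (auto simp: cong_def)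
  qed
  with maps show ?thesis
    by (simp add: bij_betw_def endo_inj_surj)
qed

lemma esym_on_bij:
  assumes "finite A" "bij_betw \<phi> A A"
  shows "esym_on j A = (\<Sum>S | S \<subseteq> A \<and> card S = j. \<Prod>t\<in>S. \<phi> t)"
proof -
  let ?F = "{S. S \<subseteq> A \<and> card S = j}"
  have inj: "inj_on \<phi> S" if "S \<subseteq> A" for S
    using assms(2) that by (auto simp: bij_betw_def intro: inj_on_subset)
  have "image \<phi> ` ?F \<subseteq> ?F"
    using assms(2) inj by (auto simp: bij_betw_def card_image)
  moreover have "inj_on (image \<phi>) ?F"
    using inj_on_image_Pow[OF bij_betw_imp_inj_on[OF assms(2)]] by (rule inj_on_subset) auto
  moreover have "finite ?F"
    using assms(1) by (auto intro: finite_subset[of _ "Pow A"])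
  ultimately have "bij_betw (image \<phi>) ?F ?F"
    by (simp add: bij_betw_def endo_inj_surj)
  then have "esym_on j A = (\<Sum>S\<in>?F. \<Prod>(\<phi> ` S))"
    unfolding esym_on_def by (rule sum.reindex_bij_betw[symmetric])
  also have "\<dots> = (\<Sum>S\<in>?F. \<Prod>t\<in>S. \<phi> t)"
    using inj by (intro sum.cong refl) (simp add: prod.reindex)
  finally show ?thesis .
qed

text \<open>A primitive root \<open>g\<close> permutes \<open>{1..p - 1}\<close> by multiplication, so
  \<open>\<sigma>\<^sub>j \<equiv> g\<^sup>j \<sigma>\<^sub>j (mod p)\<close>, while \<open>g\<^sup>j \<noteq> 1 (mod p)\<close> for \<open>0 < j < p - 1\<close>.\<close>

lemma prime_dvd_esym_on:
  assumes p: "prime p" and j: "0 < j" "j < p - 1"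
  shows "p dvd esym_on j {1..p - 1}"
proof (rule ccontr)
  assume not_dvd: "\<not> p dvd esym_on j {1..p - 1}"
  obtain g where "residue_primroot p g"
    using prime_primitive_root_exists[of p] p prime_gt_1_nat[OF p] by blast
  then have ord: "ord p g = p - 1" and "coprime p g"
    using p by (auto simp: residue_primroot_def totient_prime)
  have "\<not> p dvd g"
  proof
    assume "p dvd g"
    with \<open>coprime p g\<close> have "is_unit p"
      by (simp add: coprime_absorb_left)
    with p show False
      by (simp add: not_prime_unit)
  qed
  let ?F = "{S. S \<subseteq> {1..p - 1} \<and> card S = j}"
  have "esym_on j {1..p - 1} = (\<Sum>S\<in>?F. \<Prod>t\<in>S. g * t mod p)"
    by (rule esym_on_bij[OF finite_atLeastAtMost mult_mod_prime_bij[OF p \<open>\<not> p dvd g\<close>]])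
  also have "[\<dots> = (\<Sum>S\<in>?F. \<Prod>t\<in>S. g * t)] (mod p)"
    by (intro cong_sum cong_prod) (simp add: cong_def)
  also have "(\<Sum>S\<in>?F. \<Prod>t\<in>S. g * t) = (\<Sum>S\<in>?F. g ^ j * \<Prod>S)"
    by (intro sum.cong refl) (simp add: prod.distrib)
  also have "\<dots> = g ^ j * esym_on j {1..p - 1}"
    by (simp add: esym_on_def sum_distrib_left)
  finally have "[g ^ j * esym_on j {1..p - 1} = 1 * esym_on j {1..p - 1}] (mod p)"
    by (simp add: cong_sym_eq)
  moreover have "coprime (esym_on j {1..p - 1}) p"
    using prime_imp_coprime[OF p not_dvd] by (simp add: coprime_commute)
  ultimately have "[g ^ j = 1] (mod p)"
    by (simp only: cong_mult_rcancel_nat)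
  with ord j show False
    using ord_minimal[of j p g] by simp
qed

lemma prime_dvd_esym_on_shift:
  assumes p: "prime p"
  shows "d < j \<Longrightarrow> j < p - 1 \<Longrightarrow> p dvd esym_on j {1..p - 1 + d}"
proof (induction d arbitrary: j)
  case 0
  then show ?case
    using prime_dvd_esym_on[OF p] by simp
next
  case (Suc d)
  then obtain i where j: "j = Suc i"
    by (cases j) auto
  with Suc have "p dvd esym_on j {1..p - 1 + d}" "p dvd esym_on i {1..p - 1 + d}"
    by simp_all
  then show ?case
    using esym_on_atLeastAtMost_Suc[of i "p - 1 + d"] unfolding j by simp
qed

lemma fact_eq_prime_mult:
  assumes p: "prime p" and n: "p \<le> n" "n < 2 * p"
  obtains u where "fact n = p * u" "\<not> p dvd u"
proof -
  have "fact n = fact p * \<Prod>{Suc p..n}"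
    using fact_eq_fact_times[OF n(1)] by simp
  also have "fact p = p * fact (p - 1)"
    using prime_gt_0_nat[OF p] by (simp add: fact_reduce[where 'a = nat])
  finally have "fact n = p * (fact (p - 1) * \<Prod>{Suc p..n})"
    by simp
  moreover have "\<not> p dvd \<Prod>{Suc p..n}"
  proof
    assume "p dvd \<Prod>{Suc p..n}"
    then obtain t where t: "Suc p \<le> t" "t \<le> n" "p dvd t"
      using p by (auto simp: prime_dvd_prod_iff)
    then obtain k where "t = p * k"
      by blast
    with t n(2) have "p * 1 < p * k" "p * k < p * 2"
      by linarith+
    then have "1 < k" "k < 2"
      by (simp_all only: mult_less_cancel1)
    then show False
      by simp
  qed
  then have "\<not> p dvd fact (p - 1) * \<Prod>{Suc p..n}"
    using p prime_gt_0_nat[OF p] by (simp add: prime_dvd_mult_iff prime_dvd_fact_iff)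
  ultimately show ?thesis
    using that by blast
qed

lemma r_integral_div_fact:
  assumes p: "prime p" and n: "n < 2 * p" and a: "p \<le> n \<Longrightarrow> p dvd a"
  shows "r_integral p (of_nat a / fact n)"
proof (cases "p \<le> n")
  case False
  then have "\<not> p dvd fact n"
    using p by (simp add: prime_dvd_fact_iff)
  from r_integral_divide_nat[OF p r_integral_of_nat[OF p] this] show ?thesis
    by simp
next
  case True
  obtain u where u: "fact n = p * u" "\<not> p dvd u"
    using fact_eq_prime_mult[OF p True n] .
  obtain w where w: "a = p * w"
    using a[OF True] by blast
  have "(fact n :: rat) = of_nat p * of_nat u"
    by (metis of_nat_fact of_nat_mult u(1))
  then have "(of_nat a :: rat) / fact n = of_nat w / of_nat u"
    using w prime_gt_0_nat[OF p] by simp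
  then show ?thesis
    using r_integral_divide_nat[OF p r_integral_of_nat[OF p] u(2)] by simp
qed

lemma r_integral_esym_on_div_choose:
  assumes p: "prime p" "m + 2 \<le> p" and i: "i < m"
  shows "r_integral p (of_nat (esym_on m {1..i + m}) / of_nat ((i + Suc m) choose Suc m))"
proof -
  let ?e = "esym_on m {1..i + m}"
  define C :: nat where "C = fact (Suc m) * fact i"
  let ?B = "(i + Suc m) choose Suc m"
  have "C * ?B = fact (i + Suc m)"
    using binomial_fact_lemma[of "Suc m" "i + Suc m"] by (simp add: C_def)
  then have "(fact (i + Suc m) :: rat) = of_nat C * of_nat ?B"
    unfolding of_nat_mult[symmetric] by (simp only: of_nat_fact)
  moreover have "C \<noteq> 0"
    by (simp add: C_def)
  ultimately have "(of_nat ?e :: rat) / of_nat ?B = of_nat (?e * C) / fact (i + Suc m)"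
    by simp
  moreover have "r_integral p (of_nat (?e * C) / fact (i + Suc m))"
  proof (rule r_integral_div_fact[OF p(1)])
    show "i + Suc m < 2 * p"
      using assms by linarith
    assume "p \<le> i + Suc m"
    then have "{1..i + m} = {1..p - 1 + (i + m - (p - 1))}"
      by simp
    then have "p dvd ?e"
      using prime_dvd_esym_on_shift[OF p(1), of "i + m - (p - 1)" m] assms by simp
    then show "p dvd ?e * C"
      by simp
  qed
  ultimately show ?thesis
    by simp
qed

text \<open>Newton interpolation: by \<open>esym_on_div_choose_eq_sum\<close> the coefficients are determined
  triangularly by the values at \<open>0, ..., m - 1\<close>.\<close>

lemma r_integral_esym_quot_coeff:
  assumes p: "prime p" "m + 2 \<le> p"
  shows "r_integral p (esym_quot_coeff m j)"
proof (induction j rule: less_induct)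
  case (less j)
  show ?case
  proof (cases "j < m")
    case False
    then show ?thesis
      using esym_coeff_eq_0_high[of m "Suc m + j"] p by (simp add: esym_quot_coeff_def)
  next
    case True
    have "(\<Sum>i<m. esym_quot_coeff m i * of_nat (j choose i))
        = (\<Sum>i<Suc j. esym_quot_coeff m i * of_nat (j choose i))"
      using True by (intro sum.mono_neutral_right) (auto simp: binomial_eq_0)
    then have "esym_quot_coeff m j = of_nat (esym_on m {1..j + m}) / of_nat ((j + Suc m) choose Suc m)
        - (\<Sum>i<j. esym_quot_coeff m i * of_nat (j choose i))"
      using esym_on_div_choose_eq_sum[of m j] True by simp
    then show ?thesis
      using less.IH r_integral_esym_on_div_choose[OF p True] p
      by (auto intro!: r_integral_diff r_integral_sum r_integral_mult)
  qed
qed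

section \<open>The residue\<close>

lemma fact_div_fact_eq_pochhammer:
  assumes "k \<le> n"
  shows "(fact n / fact (n - k) :: 'a :: field_char_0) = pochhammer (of_nat n - of_nat k + 1) k"
  using fact_binomial[OF assms, where 'a = 'a] by (simp add: binomial_gbinomial gbinomial_pochhammer')

definition H_poly :: "nat \<Rightarrow> nat \<Rightarrow> rat \<Rightarrow> rat" where
  "H_poly l m x = (if m = 0 then - pochhammer (x - of_nat l + 1) l
     else (- 1) ^ (m + 1) * pochhammer (x - of_nat l) (Suc l)
       * (\<Sum>j<m. esym_quot_coeff m j * ((x - of_nat l - 1) gchoose j)) / fact (Suc m))"

lemma H_eq_H_poly:
  assumes "l < n"
  shows "H l m (2 * n + 1) = H_poly l m (of_nat n)"
proof (cases "m = 0")
  case True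
  then show ?thesis
    using assms by (simp add: H_def H_poly_def esym_eq_esym_on fact_div_fact_eq_pochhammer)
next
  case False
  define N where "N = n + m - l"
  have N: "Suc m \<le> N" "N - Suc m = n - Suc l" "Suc (N - 1) = N" "N - 1 - m = n - Suc l"
    using assms False by (auto simp: N_def)
  define S where "S = (\<Sum>j<m. esym_quot_coeff m j * ((of_nat n - of_nat l - 1) gchoose j))"
  have "of_nat ((n - Suc l) choose j) = ((of_nat n - of_nat l - 1) gchoose j :: rat)" for j
    using assms by (simp add: binomial_gbinomial of_nat_diff algebra_simps)
  then have esym: "esym m (N - 1) = of_nat (N choose Suc m) * S"
    using esym_on_eq_choose_mult_sum[of m "N - 1"] False N by (simp add: esym_eq_esym_on S_def)
  have "fact n / fact N * of_nat (N choose Suc m) = (fact n / fact (n - Suc l)) / (fact (Suc m) :: rat)"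
    using N by (simp add: binomial_fact)
  also have "\<dots> = pochhammer (of_nat n - of_nat l) (Suc l) / fact (Suc m)"
    using assms by (simp add: fact_div_fact_eq_pochhammer)
  finally have coeff: "fact n / fact N * of_nat (N choose Suc m) = \<dots>" .
  have "H l m (2 * n + 1) = fact n / fact N * (- 1) ^ (m + 1) * esym m (N - 1)"
    by (simp add: H_def N_def)
  also have "\<dots> = (- 1) ^ (m + 1) * (fact n / fact N * of_nat (N choose Suc m)) * S"
    unfolding esym by (simp only: mult_ac)
  also have "\<dots> = H_poly l m (of_nat n)"
    using False unfolding coeff by (simp add: H_poly_def S_def)
  finally show ?thesis .
qed

lemma cong_rat_H_poly:
  assumes r: "prime r" "m + 2 \<le> r" and xy: "cong_rat r x y"
  shows "cong_rat r (H_poly l m x) (H_poly l m y)"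
proof -
  have sign: "r_integral r ((- 1) ^ (m + 1))"
    using r by (intro r_integral_power r_integral_uminus r_integral_1)
  have not_dvd: "\<not> r dvd fact (Suc m)"
    using r by (simp add: prime_dvd_fact_iff del: fact_Suc)
  have "cong_rat r (pochhammer (x - of_nat l + 1) l) (pochhammer (y - of_nat l + 1) l)"
    using r xy by (intro cong_rat_pochhammer cong_rat_add cong_rat_diff cong_rat_refl) auto
  then have "cong_rat r (0 - pochhammer (x - of_nat l + 1) l) (0 - pochhammer (y - of_nat l + 1) l)"
    using r by (intro cong_rat_diff cong_rat_refl) auto
  moreover have "cong_rat r ((- 1) ^ (m + 1) * pochhammer (x - of_nat l) (Suc l)
      * (\<Sum>j<m. esym_quot_coeff m j * ((x - of_nat l - 1) gchoose j)) / of_nat (fact (Suc m)))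
    ((- 1) ^ (m + 1) * pochhammer (y - of_nat l) (Suc l)
      * (\<Sum>j<m. esym_quot_coeff m j * ((y - of_nat l - 1) gchoose j)) / of_nat (fact (Suc m)))"
    using r xy
    by (intro cong_rat_divide_nat cong_rat_mult cong_rat_pochhammer cong_rat_sum cong_rat_gchoose
        cong_rat_diff cong_rat_refl r_integral_esym_quot_coeff sign not_dvd) auto
  ultimately show ?thesis
    unfolding of_nat_fact by (simp add: H_poly_def)
qed

lemma r_integral_half:
  assumes "prime r" "r \<noteq> 2"
  shows "r_integral r (1 / 2)"
proof -
  have "\<not> r dvd 2"
    using assms primes_dvd_imp_eq two_is_prime_nat by blast
  from r_integral_divide_nat[OF assms(1) r_integral_1[OF assms(1)] this] show ?thesis
    by simp
qed

lemma cong_rat_minus_half: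
  assumes r: "prime r" "r = 2 * n + 1"
  shows "cong_rat r (of_nat n) (- 1 / 2)"
proof -
  have half: "r_integral r (1 / 2)"
    using r by (intro r_integral_half) auto
  have eq: "(of_nat n - (- 1 / 2)) / of_nat r = (1 / 2 :: rat)"
    using r(2) by (simp add: field_simps)
  show ?thesis
    unfolding cong_rat_iff[OF r(1)] eq using r_integral_uminus[OF r(1) half] half r(1) by simp
qed

lemma Zloc_iff_r_integral:
  "3 \<le> k \<Longrightarrow> q \<in> Zloc k \<longleftrightarrow> (\<forall>p. prime p \<and> k \<le> p \<longrightarrow> r_integral p q)"
  by (auto simp: Zloc_def r_integral_def not_le)

lemma subset_adjoin_half: "S \<subseteq> adjoin_half S"
proof
  fix x
  assume "x \<in> S"
  moreover have "x = x / 2 ^ 0"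
    by simp
  ultimately show "x \<in> adjoin_half S"
    unfolding adjoin_half_def by blast
qed

lemma pochhammer_half_int:
  "pochhammer (of_int a / 2 :: rat) k = of_int (\<Prod>i<k. a + 2 * int i) / 2 ^ k"
proof -
  have "pochhammer (of_int a / 2 :: rat) k = (\<Prod>i<k. of_int (a + 2 * int i) / 2)"
    by (simp add: pochhammer_prod atLeast0LessThan add_divide_distrib)
  also have "\<dots> = of_int (\<Prod>i<k. a + 2 * int i) / 2 ^ k"
    by (simp add: prod_dividef of_int_prod)
  finally show ?thesis .
qed

lemma H_poly_minus_half_mem: "H_poly l m (- 1 / 2) \<in> adjoin_half (Zloc (m + 2))"
proof (cases "m = 0")
  case True
  have eq: "- 1 / 2 - of_nat l + 1 = (of_int (1 - 2 * int l) / 2 :: rat)"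
    by simp
  have "H_poly l m (- 1 / 2) = of_int (- (\<Prod>i<l. 1 - 2 * int l + 2 * int i)) / 2 ^ l"
    unfolding H_poly_def eq pochhammer_half_int using True by simp
  moreover have "of_int z \<in> Zloc (m + 2)" for z
    using True by (simp add: Zloc_def)
  ultimately show ?thesis
    unfolding adjoin_half_def by blast
next
  case False
  have "r_integral p (H_poly l m (- 1 / 2))" if p: "prime p" "m + 2 \<le> p" for p
  proof -
    have "r_integral p (- (1 / 2))"
      using False p by (intro r_integral_uminus r_integral_half) auto
    then have "cong_rat p (- 1 / 2) (- 1 / 2)"
      using cong_rat_refl[OF p(1)] by simp
    from cong_rat_H_poly[OF p this] show ?thesis
      by (simp add: cong_rat_def)
  qed
  then have "H_poly l m (- 1 / 2) \<in> Zloc (m + 2)"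
    using False by (simp add: Zloc_iff_r_integral)
  then show ?thesis
    using subset_adjoin_half by blast
qed

theorem lemma2p4:
  fixes l m :: nat
  shows "fermat_function (H l m) \<and> fermat_residue (H l m) \<in> adjoin_half (Zloc (m + 2))"
proof -
  have "has_fermat_residue (H l m) (H_poly l m (- 1 / 2))"
    unfolding has_fermat_residue_def
  proof (intro exI allI impI)
    fix r :: nat
    assume r: "prime r \<and> 2 * l + m + 3 \<le> r"
    then obtain n where n: "r = 2 * n + 1"
      using prime_odd_nat[of r] by (auto elim: oddE)
    with r have "H l m r = H_poly l m (of_nat n)"
      using H_eq_H_poly[of l n m] by simp
    moreover have "cong_rat r (of_nat n) (- 1 / 2)"
      using r n by (intro cong_rat_minus_half) auto
    ultimately show "cong_rat r (H l m r) (H_poly l m (- 1 / 2))"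
      using r cong_rat_H_poly[of r m] by simp
  qed
  then show ?thesis
    using fermat_residue_eqI H_poly_minus_half_mem unfolding fermat_function_def by auto
qed

end
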